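(* Let $R$ be a reflexive relation on $U$ such that $\mathrm{DM(RS)}$ is completely distributive. Then: (i) $\mathcal J^{-}=\{(\emptyset,\{x\}^{\blacktriangle})\mid \{x\}^{\blacktriangle}\in\mathcal J(\wp(U)^{\blacktriangle}),\ x\notin\mathcal S\}$; (ii) if $(\emptyset,\{x\}^{\blacktriangle})\in\mathcal J^{-}$, then for any $z\in\mathfrak{core}\breve R(x)$ we have $g(\emptyset,\{x\}^{\blacktriangle})=(\{z\}^{\vartriangle\blacktriangledown},\{z\}^{\vartriangle\blacktriangle})$, $z\notin\mathcal S$, and $\{z\}^{\vartriangle}$ is completely join-irreducible in $\wp(U)^{\vartriangle}$; (iii) $\mathcal J^{+}=\{(\{x\}^{\vartriangle\blacktriangledown},\{x\}^{\vartriangle\blacktriangle})\mid \{x\}^{\vartriangle}\in\mathcal J(\wp(U)^{\vartriangle}),\ x\notin\mathcal S\}$; (iv) $\mathcal J^{\circ}=\{(\{x\},\{x\}^{\blacktriangle})\mid x\in\mathcal S\}$.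
   Context: Let $U$ be a set and $R\subseteq U\times U$ a binary relation. For $x\in U$, $R(x)=\{y\in U\mid (x,y)\in R\}$ and $\breve R(x)=\{y\in U\mid (y,x)\in R\}$; $\mathfrak{core}\breve R(x)=\{w\in \breve R(x)\mid \text{for all }y\in U,\ w\in \breve R(y)\text{ implies }\breve R(x)\subseteq \breve R(y)\}$. For $X\subseteq U$: $X^{\blacktriangledown}=\{x\in U\mid R(x)\subseteq X\}$, $X^{\blacktriangle}=\{x\in U\mid R(x)\cap X\neq\emptyset\}$, $X^{\triangledown}=\{x\in U\mid \breve R(x)\subseteq X\}$, $X^{\vartriangle}=\{x\in U\mid \breve R(x)\cap X\neq\emptyset\}$; composites like $X^{\vartriangle\blacktriangledown}$ mean $(X^{\vartriangle})^{\blacktriangledown}$. $\wp(U)^{\blacktriangledown}=\{X^{\blacktriangledown}\mid X\subseteq U\}$, and similarly $\wp(U)^{\blacktriangle},\wp(U)^{\vartriangle}$, complete lattices under $\subseteq$. $\mathcal S=\{x\in U\mid |R(x)|=1\}$. $\mathrm{RS}=\{(X^{\blacktriangledown},X^{\blacktriangle})\mid X\subseteq U\}$ ordered coordinatewise; $\mathrm{DM(RS)}$ is its Dedekind–MacNeille completion, identified with $\{(A,B)\in\wp(U)^{\blacktriangledown}\times\wp(U)^{\blacktriangle}\mid A^{\vartriangle\blacktriangle}\subseteq B,\ A\cap\mathcal S=B\cap\mathcal S\}$ ordered coordinatewise, with meets $\bigwedge_i(X_i,Y_i)=(\bigcap_iX_i,(\bigcap_iY_i)^{\triangledown\blacktriangle})$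 and joins $\bigvee_i(X_i,Y_i)=((\bigcup_iX_i)^{\vartriangle\blacktriangledown},\bigcup_iY_i)$. For a complete lattice $L$, $\mathcal J(L)$ is its set of completely join-irreducible elements ($j$ with: $j=\bigvee S$ implies $j\in S$). When $\mathrm{DM(RS)}$ is distributive ($R$ reflexive), it is a Kleene algebra with $\sim(A,B)=(B^c,A^c)$. Writing $\mathcal J=\mathcal J(\mathrm{DM(RS)})$, define for $j\in\mathcal J$ the element $g(j)=\bigwedge\{a\in\mathrm{DM(RS)}\mid a\not\le\sim j\}$ (which lies in $\mathcal J$ and is comparable with $j$), and set $\mathcal J^{-}=\{j\in\mathcal J\mid j<g(j)\}$, $\mathcal J^{\circ}=\{j\in\mathcal J\mid j=g(j)\}$, $\mathcal J^{+}=\{j\in\mathcal J\mid j>g(j)\}$. *)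

theory Defs
  imports Main
begin

text \<open>The universe U is the type 'a (U = UNIV); R is a relation on it.\<close>

definition Rimg :: "('a \<times> 'a) set \<Rightarrow> 'a \<Rightarrow> 'a set" where
  "Rimg R x = {y. (x, y) \<in> R}"

definition Rinv :: "('a \<times> 'a) set \<Rightarrow> 'a \<Rightarrow> 'a set" where
  "Rinv R x = {y. (y, x) \<in> R}"

definition core :: "('a \<times> 'a) set \<Rightarrow> 'a \<Rightarrow> 'a set" where
  "core R x = {w \<in> Rinv R x. \<forall>y. w \<in> Rinv R y \<longrightarrow> Rinv R x \<subseteq> Rinv R y}"

definition ubox :: "('a \<times> 'a) set \<Rightarrow> 'a set \<Rightarrow> 'a set" where
  "ubox R X = {x. Rimg R x \<subseteq> X}"

definition udia :: "('a \<times> 'a) set \<Rightarrow> 'a set \<Rightarrow> 'a set" where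
  "udia R X = {x. Rimg R x \<inter> X \<noteq> {}}"

definition lbox :: "('a \<times> 'a) set \<Rightarrow> 'a set \<Rightarrow> 'a set" where
  "lbox R X = {x. Rinv R x \<subseteq> X}"

definition ldia :: "('a \<times> 'a) set \<Rightarrow> 'a set \<Rightarrow> 'a set" where
  "ldia R X = {x. Rinv R x \<inter> X \<noteq> {}}"

definition Sing :: "('a \<times> 'a) set \<Rightarrow> 'a set" where
  "Sing R = {x. card (Rimg R x) = 1}"

definition lub_in :: "('b \<Rightarrow> 'b \<Rightarrow> bool) \<Rightarrow> 'b set \<Rightarrow> 'b set \<Rightarrow> 'b \<Rightarrow> bool" where
  "lub_in le L S a \<longleftrightarrow> a \<in> L \<and> (\<forall>s\<in>S. le s a) \<and> (\<forall>b\<in>L. (\<forall>s\<in>S. le s b) \<longrightarrow> le a b)"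

definition glb_in :: "('b \<Rightarrow> 'b \<Rightarrow> bool) \<Rightarrow> 'b set \<Rightarrow> 'b set \<Rightarrow> 'b \<Rightarrow> bool" where
  "glb_in le L S a \<longleftrightarrow> a \<in> L \<and> (\<forall>s\<in>S. le a s) \<and> (\<forall>b\<in>L. (\<forall>s\<in>S. le b s) \<longrightarrow> le b a)"

definition Sup_in :: "('b \<Rightarrow> 'b \<Rightarrow> bool) \<Rightarrow> 'b set \<Rightarrow> 'b set \<Rightarrow> 'b" where
  "Sup_in le L S = (THE a. lub_in le L S a)"

definition Inf_in :: "('b \<Rightarrow> 'b \<Rightarrow> bool) \<Rightarrow> 'b set \<Rightarrow> 'b set \<Rightarrow> 'b" where
  "Inf_in le L S = (THE a. glb_in le L S a)"

definition cji :: "('b \<Rightarrow> 'b \<Rightarrow> bool) \<Rightarrow> 'b set \<Rightarrow> 'b \<Rightarrow> bool" where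
  "cji le L j \<longleftrightarrow> j \<in> L \<and> (\<forall>S. S \<subseteq> L \<longrightarrow> lub_in le L S j \<longrightarrow> j \<in> S)"

definition completely_distributive :: "('b \<Rightarrow> 'b \<Rightarrow> bool) \<Rightarrow> 'b set \<Rightarrow> bool" where
  "completely_distributive le L \<longleftrightarrow>
     (\<forall>\<A>. \<A> \<subseteq> Pow L \<longrightarrow>
        Inf_in le L (Sup_in le L ` \<A>) =
        Sup_in le L {Inf_in le L (f ` \<A>) | f. \<forall>A\<in>\<A>. f A \<in> A})"

definition ple :: "'a set \<times> 'a set \<Rightarrow> 'a set \<times> 'a set \<Rightarrow> bool" where
  "ple p q \<longleftrightarrow> fst p \<subseteq> fst q \<and> snd p \<subseteq> snd q"

definition plt :: "'a set \<times> 'a set \<Rightarrow> 'a set \<times> 'a set \<Rightarrow> bool" where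
  "plt p q \<longleftrightarrow> ple p q \<and> p \<noteq> q"

definition DM :: "('a \<times> 'a) set \<Rightarrow> ('a set \<times> 'a set) set" where
  "DM R = {(A, B). A \<in> range (ubox R) \<and> B \<in> range (udia R) \<and>
                   udia R (ldia R A) \<subseteq> B \<and> A \<inter> Sing R = B \<inter> Sing R}"

definition kneg :: "'a set \<times> 'a set \<Rightarrow> 'a set \<times> 'a set" where
  "kneg p = (- snd p, - fst p)"

definition JDM :: "('a \<times> 'a) set \<Rightarrow> ('a set \<times> 'a set) set" where
  "JDM R = {j. cji ple (DM R) j}"

definition gmap :: "('a \<times> 'a) set \<Rightarrow> 'a set \<times> 'a set \<Rightarrow> 'a set \<times> 'a set" where
  "gmap R j = Inf_in ple (DM R) {a \<in> DM R. \<not> ple a (kneg j)}"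

definition Jminus :: "('a \<times> 'a) set \<Rightarrow> ('a set \<times> 'a set) set" where
  "Jminus R = {j \<in> JDM R. plt j (gmap R j)}"

definition Jcirc :: "('a \<times> 'a) set \<Rightarrow> ('a set \<times> 'a set) set" where
  "Jcirc R = {j \<in> JDM R. j = gmap R j}"

definition Jplus :: "('a \<times> 'a) set \<Rightarrow> ('a set \<times> 'a set) set" where
  "Jplus R = {j \<in> JDM R. plt (gmap R j) j}"

end

theory Submission
  imports Defs
begin

text \<open>Every element (A, B) of DM(RS) is the join of the points
  (\<open>{x}\<^sup>\<vartriangle>\<^sup>\<blacktriangledown>, {x}\<^sup>\<vartriangle>\<^sup>\<blacktriangle>\<close>) for \<open>x \<in> A\<close> and (\<open>\<emptyset>, {y}\<^sup>\<blacktriangle>\<close>) for \<open>y \<in> B\<^sup>\<triangledown> - \<S>\<close>,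
  so every completely join-irreducible element is such a point, and its irreducibility in DM(RS)
  reduces to that of \<open>{x}\<^sup>\<vartriangle>\<close> in \<open>\<wp>(U)\<^sup>\<vartriangle>\<close>, resp. of \<open>{y}\<^sup>\<blacktriangle>\<close> in \<open>\<wp>(U)\<^sup>\<blacktriangle>\<close>, because joins in
  these lattices are unions. The map g is computed directly on points: the elements not below
  \<open>\<sim>(\<emptyset>, {y}\<^sup>\<blacktriangle>)\<close> are those whose first component meets \<open>{y}\<^sup>\<blacktriangle>\<close>, and the least of them is
  the point of any z in the core of \<open>\<breve>R(y)\<close>; for a point of x one finds \<open>g \<le> (\<emptyset>, {x}\<^sup>\<blacktriangle>)\<close> if
  \<open>x \<notin> \<S>\<close> and g = id if \<open>x \<in> \<S>\<close>. The only place where complete distributivity enters is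
  \<open>(\<emptyset>, {y}\<^sup>\<blacktriangle>) \<noteq> g(\<emptyset>, {y}\<^sup>\<blacktriangle>)\<close>: in a completely distributive lattice completely
  join-irreducible elements are completely join-prime, and equality would put \<open>(\<emptyset>, {y}\<^sup>\<blacktriangle>)\<close>
  below the join of the negations of all elements not below its negation.\<close>

lemma ubox_iff: "x \<in> ubox R X \<longleftrightarrow> (\<forall>y. (x, y) \<in> R \<longrightarrow> y \<in> X)"
  by (auto simp: ubox_def Rimg_def)

lemma udia_iff: "x \<in> udia R X \<longleftrightarrow> (\<exists>y. (x, y) \<in> R \<and> y \<in> X)"
  by (auto simp: udia_def Rimg_def)

lemma lbox_iff: "x \<in> lbox R X \<longleftrightarrow> (\<forall>y. (y, x) \<in> R \<longrightarrow> y \<in> X)"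
  by (auto simp: lbox_def Rinv_def)

lemma ldia_iff: "x \<in> ldia R X \<longleftrightarrow> (\<exists>y. (y, x) \<in> R \<and> y \<in> X)"
  by (auto simp: ldia_def Rinv_def)

lemmas modal_iffs = ubox_iff udia_iff lbox_iff ldia_iff

lemma ubox_mono: "X \<subseteq> Y \<Longrightarrow> ubox R X \<subseteq> ubox R Y"
  unfolding subset_iff ubox_iff by blast

lemma udia_mono: "X \<subseteq> Y \<Longrightarrow> udia R X \<subseteq> udia R Y"
  unfolding subset_iff udia_iff by blast

lemma lbox_mono: "X \<subseteq> Y \<Longrightarrow> lbox R X \<subseteq> lbox R Y"
  unfolding subset_iff lbox_iff by blast

lemma ldia_mono: "X \<subseteq> Y \<Longrightarrow> ldia R X \<subseteq> ldia R Y"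
  unfolding subset_iff ldia_iff by blast

lemma ldia_ubox_subset: "ldia R (ubox R X) \<subseteq> X"
  unfolding subset_iff modal_iffs by blast

lemma udia_lbox_subset: "udia R (lbox R X) \<subseteq> X"
  unfolding subset_iff modal_iffs by blast

lemma subset_ubox_ldia: "X \<subseteq> ubox R (ldia R X)"
  unfolding subset_iff modal_iffs by blast

lemma ubox_ldia_ubox: "ubox R (ldia R (ubox R X)) = ubox R X"
  unfolding set_eq_iff modal_iffs by blast

lemma udia_lbox_udia: "udia R (lbox R (udia R X)) = udia R X"
  unfolding set_eq_iff modal_iffs by blast

lemma ldia_ubox_ldia: "ldia R (ubox R (ldia R X)) = ldia R X"
  unfolding set_eq_iff modal_iffs by blast

lemma compl_udia: "- udia R X = ubox R (- X)"
  unfolding set_eq_iff Compl_iff modal_iffs by blast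

lemma compl_ubox: "- ubox R X = udia R (- X)"
  unfolding set_eq_iff Compl_iff modal_iffs by blast

lemma udia_empty [simp]: "udia R {} = {}"
  by (simp add: udia_def)

lemma ldia_empty [simp]: "ldia R {} = {}"
  by (simp add: ldia_def)

lemma ldia_singleton_subset_iff: "ldia R {w} \<subseteq> X \<longleftrightarrow> w \<in> ubox R X"
  unfolding subset_iff modal_iffs by blast

lemma ldia_UN_singletons: "ldia R W = (\<Union>w\<in>W. ldia R {w})"
  unfolding set_eq_iff UN_iff ldia_iff by blast

lemma udia_Union: "udia R (\<Union>\<X>) = \<Union>(udia R ` \<X>)"
  by (auto simp: udia_iff) blast+

lemma ldia_Union: "ldia R (\<Union>\<X>) = \<Union>(ldia R ` \<X>)"
  by (auto simp: ldia_iff) blast+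

lemma range_ubox_iff: "A \<in> range (ubox R) \<longleftrightarrow> ubox R (ldia R A) = A"
  by (metis rangeE rangeI ubox_ldia_ubox)

lemma range_udia_iff: "B \<in> range (udia R) \<longleftrightarrow> udia R (lbox R B) = B"
  by (metis rangeE rangeI udia_lbox_udia)

lemma range_ldia_iff: "B \<in> range (ldia R) \<longleftrightarrow> ldia R (ubox R B) = B"
  by (metis rangeE rangeI ldia_ubox_ldia)

lemma Union_in_range_union_preserving:
  assumes "\<And>\<X>. f (\<Union>\<X>) = \<Union>(f ` \<X>)" and "T \<subseteq> range f"
  shows "\<Union>T \<in> range f"
proof -
  have "f ` {X. f X \<in> T} = T"
    using assms(2) by blast
  then have "\<Union>T = f (\<Union>{X. f X \<in> T})"
    by (simp add: assms(1))
  then show ?thesis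
    by simp
qed

lemma lub_in_subset_iff:
  assumes "\<Union>T \<in> L"
  shows "lub_in (\<subseteq>) L T t \<longleftrightarrow> t = \<Union>T"
  using assms unfolding lub_in_def by blast

lemma cji_subset_union_closed_iff:
  assumes "\<And>T. T \<subseteq> L \<Longrightarrow> \<Union>T \<in> L"
  shows "cji (\<subseteq>) L t \<longleftrightarrow> t \<in> L \<and> (\<forall>T\<subseteq>L. \<Union>T = t \<longrightarrow> t \<in> T)"
  unfolding cji_def using lub_in_subset_iff assms by metis

lemma cji_range_udia_iff:
  "cji (\<subseteq>) (range (udia R)) t \<longleftrightarrow>
     t \<in> range (udia R) \<and> (\<forall>T\<subseteq>range (udia R). \<Union>T = t \<longrightarrow> t \<in> T)"
  by (intro cji_subset_union_closed_iff Union_in_range_union_preserving udia_Union)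

lemma cji_range_udia_D:
  "cji (\<subseteq>) (range (udia R)) t \<Longrightarrow> T \<subseteq> range (udia R) \<Longrightarrow> \<Union>T = t \<Longrightarrow> t \<in> T"
  by (simp add: cji_range_udia_iff)

lemma cji_range_ldia_iff:
  "cji (\<subseteq>) (range (ldia R)) t \<longleftrightarrow>
     t \<in> range (ldia R) \<and> (\<forall>T\<subseteq>range (ldia R). \<Union>T = t \<longrightarrow> t \<in> T)"
  by (intro cji_subset_union_closed_iff Union_in_range_union_preserving ldia_Union)

lemma cji_range_ldia_D:
  "cji (\<subseteq>) (range (ldia R)) t \<Longrightarrow> T \<subseteq> range (ldia R) \<Longrightarrow> \<Union>T = t \<Longrightarrow> t \<in> T"
  by (simp add: cji_range_ldia_iff)

lemma ple_refl: "ple p p"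
  by (simp add: ple_def)

lemma ple_trans: "ple p q \<Longrightarrow> ple q r \<Longrightarrow> ple p r"
  by (auto simp: ple_def)

lemma ple_antisym: "ple p q \<Longrightarrow> ple q p \<Longrightarrow> p = q"
  by (auto simp: ple_def prod_eq_iff)

lemma plt_irrefl: "\<not> plt p p"
  by (simp add: plt_def)

lemma plt_asym: "plt p q \<Longrightarrow> \<not> plt q p"
  by (auto simp: plt_def dest: ple_antisym)

lemma lub_in_ple_unique: "lub_in ple L S p \<Longrightarrow> lub_in ple L S q \<Longrightarrow> p = q"
  unfolding lub_in_def by (meson ple_antisym)

lemma glb_in_ple_unique: "glb_in ple L S p \<Longrightarrow> glb_in ple L S q \<Longrightarrow> p = q"
  unfolding glb_in_def by (meson ple_antisym)

lemma DM_iff: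
  "(A, B) \<in> DM R \<longleftrightarrow> ubox R (ldia R A) = A \<and> udia R (lbox R B) = B \<and>
     udia R (ldia R A) \<subseteq> B \<and> A \<inter> Sing R = B \<inter> Sing R"
  unfolding DM_def by (simp add: range_ubox_iff range_udia_iff)

lemma DM_D:
  assumes "p \<in> DM R"
  shows "ubox R (ldia R (fst p)) = fst p" and "udia R (lbox R (snd p)) = snd p"
    and "udia R (ldia R (fst p)) \<subseteq> snd p" and "fst p \<inter> Sing R = snd p \<inter> Sing R"
  using assms DM_iff[of "fst p" "snd p" R] by simp_all

lemma DM_I:
  "ubox R (ldia R A) = A \<Longrightarrow> udia R (lbox R B) = B \<Longrightarrow>
     udia R (ldia R A) \<subseteq> B \<Longrightarrow> A \<inter> Sing R = B \<inter> Sing R \<Longrightarrow> (A, B) \<in> DM R"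
  by (simp add: DM_iff)

lemma kneg_DM:
  assumes p: "p \<in> DM R"
  shows "kneg p \<in> DM R"
proof -
  have "- snd p = ubox R (- lbox R (snd p))" "- fst p = udia R (- ldia R (fst p))"
    using compl_udia[of R "lbox R (snd p)"] compl_ubox[of R "ldia R (fst p)"] DM_D(1,2)[OF p]
    by simp_all
  then have "ubox R (ldia R (- snd p)) = - snd p" "udia R (lbox R (- fst p)) = - fst p"
    by (metis ubox_ldia_ubox, metis udia_lbox_udia)
  moreover have "udia R (ldia R (- snd p)) \<subseteq> - fst p"
    \<comment> \<open>\<open>x \<in> A\<close> and \<open>(x, y), (v, y) \<in> R\<close> force \<open>v \<in> A\<^sup>\<vartriangle>\<^sup>\<blacktriangle> \<subseteq> B\<close>\<close>
    using DM_D(3)[OF p] by (fastforce simp: modal_iffs)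
  moreover have "- snd p \<inter> Sing R = - fst p \<inter> Sing R"
    using DM_D(4)[OF p] by blast
  ultimately show ?thesis
    unfolding kneg_def by (rule DM_I)
qed

definition DM_Sup :: "('a \<times> 'a) set \<Rightarrow> ('a set \<times> 'a set) set \<Rightarrow> 'a set \<times> 'a set" where
  "DM_Sup R S = (ubox R (ldia R (\<Union>(fst ` S))), \<Union>(snd ` S))"

definition DM_Inf :: "('a \<times> 'a) set \<Rightarrow> ('a set \<times> 'a set) set \<Rightarrow> 'a set \<times> 'a set" where
  "DM_Inf R S = (\<Inter>(fst ` S), udia R (lbox R (\<Inter>(snd ` S))))"

abbreviation plus_point :: "('a \<times> 'a) set \<Rightarrow> 'a \<Rightarrow> 'a set \<times> 'a set" where
  "plus_point R x \<equiv> (ubox R (ldia R {x}), udia R (ldia R {x}))"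

abbreviation minus_point :: "('a \<times> 'a) set \<Rightarrow> 'a \<Rightarrow> 'a set \<times> 'a set" where
  "minus_point R y \<equiv> ({}, udia R {y})"

lemma in_fst_plus_point: "x \<in> ubox R (ldia R {x})"
  by (auto simp: modal_iffs)

lemma plus_point_le_iff:
  assumes p: "p \<in> DM R"
  shows "ple (plus_point R x) p \<longleftrightarrow> x \<in> fst p"
proof
  assume "x \<in> fst p"
  then have "ldia R {x} \<subseteq> ldia R (fst p)"
    by (simp add: ldia_mono)
  then have "ubox R (ldia R {x}) \<subseteq> fst p" "udia R (ldia R {x}) \<subseteq> snd p"
    using DM_D(1,3)[OF p] ubox_mono[of "ldia R {x}" "ldia R (fst p)" R]
      udia_mono[of "ldia R {x}" "ldia R (fst p)" R] by auto
  then show "ple (plus_point R x) p"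
    by (simp add: ple_def)
qed (use in_fst_plus_point[of x R] in \<open>auto simp: ple_def\<close>)

lemma plus_point_le_plus_point_iff:
  "ple (plus_point R x) (plus_point R w) \<longleftrightarrow> ldia R {x} \<subseteq> ldia R {w}"
proof
  assume "ple (plus_point R x) (plus_point R w)"
  then have "x \<in> ubox R (ldia R {w})"
    using in_fst_plus_point[of x R] by (auto simp: ple_def)
  then show "ldia R {x} \<subseteq> ldia R {w}"
    by (simp add: ldia_singleton_subset_iff)
qed (simp add: ple_def ubox_mono udia_mono)

lemma DM_Sup_plus_points:
  "DM_Sup R (plus_point R ` W) = (ubox R (ldia R W), udia R (ldia R W))"
proof -
  have "ldia R (\<Union>w\<in>W. ubox R (ldia R {w})) = (\<Union>w\<in>W. ldia R {w})"
    by (simp add: ldia_Union image_image ldia_ubox_ldia)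
  also have "\<dots> = ldia R W"
    by (rule ldia_UN_singletons[symmetric])
  moreover have "(\<Union>w\<in>W. udia R (ldia R {w})) = udia R (ldia R W)"
    by (auto simp: modal_iffs) blast+
  ultimately show ?thesis
    unfolding DM_Sup_def by (simp add: image_image)
qed

lemma core_ldia_subset:
  assumes "z \<in> core R y" "(w, y) \<in> R"
  shows "ldia R {z} \<subseteq> ldia R {w}"
proof
  fix u assume "u \<in> ldia R {z}"
  then have "Rinv R y \<subseteq> Rinv R u" "w \<in> Rinv R y"
    using assms by (auto simp: core_def Rinv_def ldia_iff)
  then show "u \<in> ldia R {w}"
    by (auto simp: Rinv_def ldia_iff)
qed

lemma ple_kneg_iff: "ple p (kneg q) \<longleftrightarrow> ple q (kneg p)"
  by (auto simp: ple_def kneg_def)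

lemma not_ple_kneg_minus_point_iff:
  "\<not> ple p (kneg (minus_point R y)) \<longleftrightarrow> fst p \<inter> udia R {y} \<noteq> {}"
  by (auto simp: ple_def kneg_def)

lemma DM_Sup_singleton: "p \<in> DM R \<Longrightarrow> DM_Sup R {p} = p"
  by (simp add: DM_Sup_def DM_D(1))

lemma cji_ldia_core:
  assumes z: "z \<in> core R y"
  shows "cji (\<subseteq>) (range (ldia R)) (ldia R {z})"
  unfolding cji_range_ldia_iff
proof (intro conjI allI impI)
  fix T assume T: "T \<subseteq> range (ldia R)" "\<Union>T = ldia R {z}"
  have "y \<in> ldia R {z}"
    using z by (simp add: core_def Rinv_def ldia_iff)
  then have "y \<in> \<Union>T"
    using T(2) by simp
  then obtain t where t: "t \<in> T" "y \<in> t"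
    by blast
  have "t \<in> range (ldia R)"
    using T(1) t(1) by blast
  then have "y \<in> ldia R (ubox R t)"
    using t(2) by (simp only: range_ldia_iff)
  then obtain w where w: "w \<in> ubox R t" "(w, y) \<in> R"
    by (auto simp: ldia_iff)
  have "ldia R {z} \<subseteq> ldia R {w}"
    using core_ldia_subset[OF z w(2)] .
  also have "\<dots> \<subseteq> t"
    using w(1) by (simp add: ldia_singleton_subset_iff)
  finally have "ldia R {z} \<subseteq> t" .
  moreover have "t \<subseteq> ldia R {z}"
    using t(1) T(2) Union_upper[of t T] by simp
  ultimately have "ldia R {z} = t"
    by (rule subset_antisym)
  then show "ldia R {z} \<in> T"
    using t(1) by simp
qed blast

locale refl_rel =
  fixes R :: "('a \<times> 'a) set"
  assumes refl: "refl R"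
begin

lemma R_refl: "(x, x) \<in> R"
  using refl by (rule reflD)

lemma Sing_iff: "x \<in> Sing R \<longleftrightarrow> (\<forall>y. (x, y) \<in> R \<longrightarrow> y = x)"
proof -
  have "x \<in> Rimg R x"
    by (simp add: Rimg_def R_refl)
  then have "x \<in> Sing R \<longleftrightarrow> Rimg R x = {x}"
    unfolding Sing_def by (auto simp: card_1_singleton_iff)
  then show ?thesis
    using \<open>x \<in> Rimg R x\<close> by (auto simp: Rimg_def)
qed

lemma SingD: "x \<in> Sing R \<Longrightarrow> (x, y) \<in> R \<Longrightarrow> y = x"
  by (simp add: Sing_iff)

lemma subset_udia: "X \<subseteq> udia R X"
  unfolding subset_iff udia_iff using R_refl by blast

lemma subset_ldia: "X \<subseteq> ldia R X"
  unfolding subset_iff ldia_iff using R_refl by blast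

lemma lbox_subset: "lbox R X \<subseteq> X"
  using R_refl by (auto simp: lbox_iff)

lemma ubox_empty: "ubox R {} = {}"
  unfolding set_eq_iff ubox_iff using R_refl by blast

lemma Sing_ldia_singleton: "x \<in> Sing R \<Longrightarrow> ldia R {x} = {x}"
  using R_refl by (auto simp: ldia_iff dest: SingD)

subsection \<open>The complete lattice DM(RS)\<close>

lemma DM_Sup_in_DM:
  assumes S: "S \<subseteq> DM R"
  shows "DM_Sup R S \<in> DM R"
proof -
  define A where "A = \<Union>(fst ` S)"
  define B where "B = \<Union>(snd ` S)"
  note D = DM_D[OF subsetD[OF S]]
  have "udia R (lbox R B) = B"
  proof (rule subset_antisym[OF udia_lbox_subset], rule subsetI)
    fix x assume "x \<in> B"
    then obtain s where s: "s \<in> S" "x \<in> snd s"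
      unfolding B_def by blast
    have "lbox R (snd s) \<subseteq> lbox R B"
      using s(1) unfolding B_def by (intro lbox_mono) blast
    then show "x \<in> udia R (lbox R B)"
      using s(2) D(2)[OF s(1)] udia_mono[of "lbox R (snd s)" "lbox R B" R] by blast
  qed
  moreover have "udia R (ldia R (ubox R (ldia R A))) \<subseteq> B"
  proof -
    have "udia R (ldia R A) = (\<Union>s\<in>S. udia R (ldia R (fst s)))"
      unfolding A_def by (simp add: ldia_Union udia_Union image_image)
    also have "\<dots> \<subseteq> B"
      unfolding B_def using D(3) by blast
    finally show ?thesis
      by (simp add: ldia_ubox_ldia)
  qed
  moreover have "ubox R (ldia R A) \<inter> Sing R = B \<inter> Sing R"
  proof (intro equalityI subsetI)
    fix y assume y: "y \<in> ubox R (ldia R A) \<inter> Sing R"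
    then have "y \<in> ldia R A"
      using R_refl[of y] by (simp add: ubox_iff)
    then obtain w s where ws: "(w, y) \<in> R" "s \<in> S" "w \<in> fst s"
      unfolding A_def ldia_iff by blast
    then have "y \<in> udia R (ldia R (fst s))"
      using R_refl[of y] unfolding udia_iff ldia_iff by blast
    then have "y \<in> snd s"
      using D(3)[OF ws(2)] by blast
    then show "y \<in> B \<inter> Sing R"
      using y ws(2) unfolding B_def by blast
  next
    fix y assume y: "y \<in> B \<inter> Sing R"
    then obtain s where s: "s \<in> S" "y \<in> snd s"
      unfolding B_def by auto
    then have "y \<in> fst s"
      using y D(4)[OF s(1)] by auto
    then have "y \<in> A"
      using s(1) unfolding A_def by auto
    then show "y \<in> ubox R (ldia R A) \<inter> Sing R"
      using y subset_ubox_ldia[of A R] by auto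
  qed
  ultimately show ?thesis
    unfolding DM_Sup_def A_def[symmetric] B_def[symmetric] by (intro DM_I ubox_ldia_ubox)
qed

lemma lub_in_DM_Sup:
  assumes S: "S \<subseteq> DM R"
  shows "lub_in ple (DM R) S (DM_Sup R S)"
proof -
  have "ple s (DM_Sup R S)" if "s \<in> S" for s
  proof -
    have "fst s = ubox R (ldia R (fst s))"
      using DM_D(1)[of s R] S that by auto
    also have "\<dots> \<subseteq> ubox R (ldia R (\<Union>(fst ` S)))"
      using that by (intro ubox_mono ldia_mono) blast
    finally show ?thesis
      using that unfolding ple_def DM_Sup_def by auto
  qed
  moreover have "ple (DM_Sup R S) b" if "b \<in> DM R" "\<forall>s\<in>S. ple s b" for b
  proof -
    have "ubox R (ldia R (\<Union>(fst ` S))) \<subseteq> ubox R (ldia R (fst b))"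
      using that(2) unfolding ple_def by (intro ubox_mono ldia_mono) blast
    also have "\<dots> = fst b"
      by (rule DM_D(1)[OF that(1)])
    finally have "ubox R (ldia R (\<Union>(fst ` S))) \<subseteq> fst b" .
    moreover have "\<Union>(snd ` S) \<subseteq> snd b"
      using that(2) unfolding ple_def by blast
    ultimately show ?thesis
      unfolding ple_def DM_Sup_def by simp
  qed
  ultimately show ?thesis
    unfolding lub_in_def using DM_Sup_in_DM[OF S] by blast
qed

lemma DM_Inf_in_DM:
  assumes S: "S \<subseteq> DM R"
  shows "DM_Inf R S \<in> DM R"
proof -
  define A where "A = \<Inter>(fst ` S)"
  define B where "B = \<Inter>(snd ` S)"
  note D = DM_D[OF subsetD[OF S]]
  have "ubox R (ldia R A) \<subseteq> ubox R (ldia R (fst s))" if "s \<in> S" for s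
    using that unfolding A_def by (intro ubox_mono ldia_mono) blast
  then have "ubox R (ldia R A) = A"
    using D(1) subset_ubox_ldia unfolding A_def by (metis (no_types, lifting) INT_greatest subset_antisym)
  moreover have ldia_A: "ldia R A \<subseteq> lbox R B"
  proof
    fix y assume y: "y \<in> ldia R A"
    have "v \<in> snd s" if "(v, y) \<in> R" "s \<in> S" for v s
    proof -
      have "y \<in> ldia R (fst s)"
        using y ldia_mono[of A "fst s" R] \<open>s \<in> S\<close> unfolding A_def by blast
      then have "v \<in> udia R (ldia R (fst s))"
        using that(1) by (auto simp: udia_iff)
      then show ?thesis
        using D(3)[OF that(2)] by blast
    qed
    then show "y \<in> lbox R B"
      unfolding B_def by (auto simp: lbox_iff)
  qed
  then have "udia R (ldia R A) \<subseteq> udia R (lbox R B)"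
    by (rule udia_mono)
  moreover have "A \<inter> Sing R = udia R (lbox R B) \<inter> Sing R"
  proof (intro equalityI subsetI)
    fix y assume "y \<in> A \<inter> Sing R"
    then show "y \<in> udia R (lbox R B) \<inter> Sing R"
      using ldia_A subset_ldia subset_udia by blast
  next
    fix y assume y: "y \<in> udia R (lbox R B) \<inter> Sing R"
    then obtain v where "(y, v) \<in> R" "v \<in> lbox R B"
      by (auto simp: udia_iff)
    then have "y \<in> B"
      using y SingD[of y v] lbox_subset by auto
    have "y \<in> fst s" if "s \<in> S" for s
    proof -
      have "y \<in> snd s \<inter> Sing R"
        using \<open>y \<in> B\<close> y that unfolding B_def by blast
      then show ?thesis
        using D(4)[OF that] by (metis Int_iff)
    qed
    then show "y \<in> A \<inter> Sing R"
      using y unfolding A_def by blast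
  qed
  ultimately show ?thesis
    unfolding DM_Inf_def A_def[symmetric] B_def[symmetric] by (intro DM_I udia_lbox_udia)
qed

lemma glb_in_DM_Inf:
  assumes S: "S \<subseteq> DM R"
  shows "glb_in ple (DM R) S (DM_Inf R S)"
proof -
  have "ple (DM_Inf R S) s" if "s \<in> S" for s
    using that udia_lbox_subset[of R "\<Inter>(snd ` S)"] unfolding ple_def DM_Inf_def by auto
  moreover have "ple b (DM_Inf R S)" if "b \<in> DM R" "\<forall>s\<in>S. ple b s" for b
  proof -
    have "udia R (lbox R (snd b)) \<subseteq> udia R (lbox R (\<Inter>(snd ` S)))"
      using that(2) unfolding ple_def by (intro udia_mono lbox_mono) blast
    then show ?thesis
      using that DM_D(2)[OF that(1)] unfolding ple_def DM_Inf_def by auto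
  qed
  ultimately show ?thesis
    unfolding glb_in_def using DM_Inf_in_DM[OF S] by blast
qed

lemma Sup_in_DM_eq: "S \<subseteq> DM R \<Longrightarrow> Sup_in ple (DM R) S = DM_Sup R S"
  unfolding Sup_in_def by (rule the_equality) (blast intro: lub_in_DM_Sup lub_in_ple_unique)+

lemma Inf_in_DM_eq: "S \<subseteq> DM R \<Longrightarrow> Inf_in ple (DM R) S = DM_Inf R S"
  unfolding Inf_in_def by (rule the_equality) (blast intro: glb_in_DM_Inf glb_in_ple_unique)+

lemma lub_in_DM_imp_eq: "S \<subseteq> DM R \<Longrightarrow> lub_in ple (DM R) S p \<Longrightarrow> p = DM_Sup R S"
  using lub_in_DM_Sup lub_in_ple_unique by blast

lemma Inf_in_DM_least:
  assumes "m \<in> S" "S \<subseteq> DM R" "\<forall>s\<in>S. ple m s"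
  shows "Inf_in ple (DM R) S = m"
  using assms glb_in_DM_Inf[OF assms(2)] Inf_in_DM_eq[OF assms(2)]
  unfolding glb_in_def by (metis ple_antisym subsetD)

lemma Inf_in_DM_lower: "s \<in> S \<Longrightarrow> S \<subseteq> DM R \<Longrightarrow> ple (Inf_in ple (DM R) S) s"
  using glb_in_DM_Inf Inf_in_DM_eq unfolding glb_in_def by metis

subsection \<open>Points and completely join-irreducible elements\<close>

lemma minus_point_disjoint_Sing: "y \<notin> Sing R \<Longrightarrow> udia R {y} \<inter> Sing R = {}"
  by (auto simp: udia_iff) (metis SingD)

lemma minus_point_DM:
  assumes "y \<notin> Sing R"
  shows "minus_point R y \<in> DM R"
proof (rule DM_I)
  show "{} \<inter> Sing R = udia R {y} \<inter> Sing R"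
    using minus_point_disjoint_Sing[OF assms] by blast
qed (simp_all add: ubox_empty udia_lbox_udia)

lemma minus_point_DM_imp_not_Sing: "minus_point R y \<in> DM R \<Longrightarrow> y \<notin> Sing R"
  using DM_D(4)[of "minus_point R y" R] subset_udia[of "{y}"] by auto

lemma plus_point_DM: "plus_point R x \<in> DM R"
proof (rule DM_I)
  have "y \<in> ubox R (ldia R {x}) \<longleftrightarrow> y \<in> udia R (ldia R {x})" if "y \<in> Sing R" for y
    using R_refl[of y] SingD[OF that] by (auto simp: modal_iffs)
  then show "ubox R (ldia R {x}) \<inter> Sing R = udia R (ldia R {x}) \<inter> Sing R"
    by blast
qed (simp_all add: ubox_ldia_ubox udia_lbox_udia udia_mono ldia_ubox_subset)

lemma plus_point_Sing:
  assumes x: "x \<in> Sing R"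
  shows "plus_point R x = ({x}, udia R {x})"
proof -
  have "ubox R {x} = {x}"
    using R_refl SingD[OF x] by (auto simp: ubox_iff)
  then show ?thesis
    by (simp add: Sing_ldia_singleton[OF x])
qed

lemma DM_eq_Sup_points:
  assumes p: "p \<in> DM R"
  shows "p = DM_Sup R (plus_point R ` fst p \<union> minus_point R ` (lbox R (snd p) - Sing R))"
    (is "p = DM_Sup R ?S")
proof -
  note D = DM_D[OF p]
  have "\<Union>(fst ` ?S) = fst p"
  proof (intro equalityI subsetI)
    fix v assume "v \<in> \<Union>(fst ` ?S)"
    then obtain x where "x \<in> fst p" "v \<in> ubox R (ldia R {x})"
      by auto
    then show "v \<in> fst p"
      using D(1) ubox_mono[OF ldia_mono[of "{x}" "fst p"]] by auto
  next
    fix v assume "v \<in> fst p"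
    then have "plus_point R v \<in> ?S"
      by blast
    then show "v \<in> \<Union>(fst ` ?S)"
      by (rule UnionI[OF imageI]) (simp add: in_fst_plus_point)
  qed
  moreover have "\<Union>(snd ` ?S) = snd p"
  proof (intro equalityI subsetI)
    fix v assume "v \<in> \<Union>(snd ` ?S)"
    then consider x where "x \<in> fst p" "v \<in> udia R (ldia R {x})"
      | y where "y \<in> lbox R (snd p)" "v \<in> udia R {y}"
      by auto
    then show "v \<in> snd p"
    proof cases
      case 1
      then show ?thesis
        using D(3) udia_mono[OF ldia_mono[of "{x}" "fst p"]] by auto
    next
      case 2
      then have "v \<in> udia R (lbox R (snd p))"
        using udia_mono[of "{y}" "lbox R (snd p)"] by auto
      then show ?thesis
        using D(2) by simp
    qed
  next
    fix v assume "v \<in> snd p"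
    then obtain y where y: "(v, y) \<in> R" "y \<in> lbox R (snd p)"
      using D(2) udia_iff by metis
    show "v \<in> \<Union>(snd ` ?S)"
    proof (cases "y \<in> Sing R")
      case False
      then have "minus_point R y \<in> ?S"
        using y by blast
      then show ?thesis
        by (rule UnionI[OF imageI]) (use y(1) in \<open>simp add: udia_iff\<close>)
    next
      case True
      have "y \<in> snd p"
        using y(2) lbox_subset by blast
      then have "y \<in> fst p"
        using True D(4) by (metis Int_iff)
      then have "plus_point R y \<in> ?S"
        by blast
      then show ?thesis
        by (rule UnionI[OF imageI]) (use y(1) R_refl[of y] in \<open>auto simp: modal_iffs\<close>)
    qed
  qed
  ultimately show ?thesis
    unfolding DM_Sup_def using D(1) by simp
qed

lemma lub_in_DM_iff: "S \<subseteq> DM R \<Longrightarrow> lub_in ple (DM R) S j \<longleftrightarrow> DM_Sup R S = j"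
  using lub_in_DM_Sup lub_in_DM_imp_eq by blast

lemma cji_DM_iff:
  "cji ple (DM R) j \<longleftrightarrow> j \<in> DM R \<and> (\<forall>S\<subseteq>DM R. DM_Sup R S = j \<longrightarrow> j \<in> S)"
  unfolding cji_def by (simp add: lub_in_DM_iff)

lemma cji_DM_D: "cji ple (DM R) j \<Longrightarrow> S \<subseteq> DM R \<Longrightarrow> DM_Sup R S = j \<Longrightarrow> j \<in> S"
  by (simp add: cji_DM_iff)

lemma JDM_cases:
  assumes "j \<in> JDM R"
  obtains (plus) x where "j = plus_point R x"
    | (minus) y where "y \<notin> Sing R" "j = minus_point R y"
proof -
  define S where "S = plus_point R ` fst j \<union> minus_point R ` (lbox R (snd j) - Sing R)"
  have j: "cji ple (DM R) j"
    using assms by (simp add: JDM_def)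
  have "S \<subseteq> DM R"
    unfolding S_def using plus_point_DM minus_point_DM by blast
  moreover have "DM_Sup R S = j"
    unfolding S_def by (rule DM_eq_Sup_points[symmetric]) (use j in \<open>simp add: cji_DM_iff\<close>)
  ultimately have "j \<in> S"
    by (rule cji_DM_D[OF j])
  then show thesis
    unfolding S_def by (auto intro: that)
qed

lemma cji_minus_point_iff:
  assumes y: "y \<notin> Sing R"
  shows "cji ple (DM R) (minus_point R y) \<longleftrightarrow> cji (\<subseteq>) (range (udia R)) (udia R {y})"
proof
  assume c: "cji ple (DM R) (minus_point R y)"
  show "cji (\<subseteq>) (range (udia R)) (udia R {y})"
    unfolding cji_range_udia_iff
  proof (intro conjI allI impI)
    fix T assume T: "T \<subseteq> range (udia R)" "\<Union>T = udia R {y}"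
    define S where "S = Pair ({} :: 'a set) ` T"
    have "({}, t) \<in> DM R" if "t \<in> T" for t
    proof (rule DM_I)
      have "t \<in> range (udia R)"
        using T(1) that by blast
      then show "udia R (lbox R t) = t"
        by (simp only: range_udia_iff)
      have "t \<subseteq> udia R {y}"
        using that T(2) by blast
      then show "{} \<inter> Sing R = t \<inter> Sing R"
        using minus_point_disjoint_Sing[OF y] by blast
    qed (simp_all add: ubox_empty)
    then have "S \<subseteq> DM R"
      unfolding S_def by blast
    moreover have "DM_Sup R S = minus_point R y"
      unfolding DM_Sup_def S_def using T(2) by (simp add: image_image ubox_empty)
    ultimately have "minus_point R y \<in> S"
      by (rule cji_DM_D[OF c])
    then show "udia R {y} \<in> T"
      unfolding S_def by blast
  qed blast
next
  assume c: "cji (\<subseteq>) (range (udia R)) (udia R {y})"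
  show "cji ple (DM R) (minus_point R y)"
    unfolding cji_DM_iff
  proof (intro conjI allI impI)
    fix S assume S: "S \<subseteq> DM R" and Sup: "DM_Sup R S = minus_point R y"
    have "t \<in> range (udia R)" if "t \<in> snd ` S" for t
      using that S DM_D(2) range_udia_iff by blast
    moreover have "\<Union>(snd ` S) = udia R {y}"
      using Sup unfolding DM_Sup_def by simp
    ultimately have "udia R {y} \<in> snd ` S"
      by (intro cji_range_udia_D[OF c]) blast+
    then obtain s where s: "s \<in> S" "snd s = udia R {y}"
      by blast
    have "fst s \<subseteq> fst (DM_Sup R S)"
      using s(1) subset_ubox_ldia unfolding DM_Sup_def by fastforce
    then have "fst s = {}"
      using Sup by simp
    then have "s = minus_point R y"
      using s(2) by (simp add: prod_eq_iff)
    then show "minus_point R y \<in> S"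
      using s(1) by simp
  qed (rule minus_point_DM[OF y])
qed


lemma DM_Sup_upper: "S \<subseteq> DM R \<Longrightarrow> s \<in> S \<Longrightarrow> ple s (DM_Sup R S)"
  using lub_in_DM_Sup unfolding lub_in_def by blast

lemma cji_plus_point_iff:
  "cji ple (DM R) (plus_point R x) \<longleftrightarrow> cji (\<subseteq>) (range (ldia R)) (ldia R {x})"
proof
  assume c: "cji ple (DM R) (plus_point R x)"
  show "cji (\<subseteq>) (range (ldia R)) (ldia R {x})"
    unfolding cji_range_ldia_iff
  proof (intro conjI allI impI)
    fix T assume T: "T \<subseteq> range (ldia R)" "\<Union>T = ldia R {x}"
    define W where "W = \<Union>(ubox R ` T)"
    have fixed: "ldia R (ubox R t) = t" if "t \<in> T" for t
    proof -
      have "t \<in> range (ldia R)"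
        using T(1) that by blast
      then show ?thesis
        by (simp only: range_ldia_iff)
    qed
    have "ldia R W = (\<Union>t\<in>T. ldia R (ubox R t))"
      unfolding W_def by (simp add: ldia_Union image_image)
    also have "\<dots> = ldia R {x}"
      using T(2) fixed by (simp cong: SUP_cong)
    finally have "DM_Sup R (plus_point R ` W) = plus_point R x"
      by (simp add: DM_Sup_plus_points)
    then have "plus_point R x \<in> plus_point R ` W"
      by (rule cji_DM_D[OF c, rotated]) (use plus_point_DM in blast)
    then obtain w where w: "w \<in> W" "plus_point R x = plus_point R w"
      by auto
    then obtain t where t: "t \<in> T" "w \<in> ubox R t"
      unfolding W_def by blast
    have "ldia R {x} \<subseteq> ldia R {w}"
      using plus_point_le_plus_point_iff[of R x w] w(2) by (simp add: ple_refl)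
    also have "\<dots> \<subseteq> t"
      using t(2) by (simp add: ldia_singleton_subset_iff)
    finally have "ldia R {x} \<subseteq> t" .
    moreover have "t \<subseteq> ldia R {x}"
      using t(1) T(2) Union_upper[of t T] by simp
    ultimately have "ldia R {x} = t"
      by (rule subset_antisym)
    then show "ldia R {x} \<in> T"
      using t(1) by simp
  qed blast
next
  assume c: "cji (\<subseteq>) (range (ldia R)) (ldia R {x})"
  show "cji ple (DM R) (plus_point R x)"
    unfolding cji_DM_iff
  proof (intro conjI allI impI)
    fix S assume S: "S \<subseteq> DM R" and Sup: "DM_Sup R S = plus_point R x"
    define W where "W = \<Union>(fst ` S)"
    have "ubox R (ldia R W) = ubox R (ldia R {x})"
      using Sup unfolding DM_Sup_def W_def by simp
    then have "ldia R W = ldia R {x}"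
      by (metis ldia_ubox_ldia)
    then have "\<Union>((\<lambda>w. ldia R {w}) ` W) = ldia R {x}"
      using ldia_UN_singletons[of R W] by simp
    then have "ldia R {x} \<in> (\<lambda>w. ldia R {w}) ` W"
      by (rule cji_range_ldia_D[OF c, rotated]) blast
    then obtain s w where s: "s \<in> S" "w \<in> fst s" "ldia R {x} = ldia R {w}"
      unfolding W_def by auto
    have "ple (plus_point R x) s"
      using s by (simp add: plus_point_le_iff subsetD[OF S])
    moreover have "ple s (plus_point R x)"
      using DM_Sup_upper[OF S s(1)] Sup by simp
    ultimately have "plus_point R x = s"
      by (rule ple_antisym)
    then show "plus_point R x \<in> S"
      using s(1) by simp
  qed (rule plus_point_DM)
qed

lemma cji_ldia_Sing:
  assumes x: "x \<in> Sing R"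
  shows "cji (\<subseteq>) (range (ldia R)) (ldia R {x})"
  unfolding cji_range_ldia_iff Sing_ldia_singleton[OF x]
proof (intro conjI allI impI)
  fix T assume "\<Union>T = {x}"
  then obtain t where "t \<in> T" "x \<in> t" "t \<subseteq> {x}"
    by blast
  then show "{x} \<in> T"
    by (metis subset_singletonD empty_iff)
qed (metis Sing_ldia_singleton[OF x] rangeI)

lemma core_not_Sing: "x \<notin> Sing R \<Longrightarrow> z \<in> core R x \<Longrightarrow> z \<notin> Sing R"
  by (auto simp: core_def Rinv_def dest: SingD)

subsection \<open>The map g\<close>

lemma gmap_eq_DM_Inf: "gmap R j = DM_Inf R {a \<in> DM R. \<not> ple a (kneg j)}"
  unfolding gmap_def by (rule Inf_in_DM_eq) blast

lemma gmap_lower: "a \<in> DM R \<Longrightarrow> \<not> ple a (kneg j) \<Longrightarrow> ple (gmap R j) a"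
  unfolding gmap_def by (rule Inf_in_DM_lower) auto

lemma gmap_eq_least:
  assumes "m \<in> DM R" "\<not> ple m (kneg j)"
    and "\<And>a. a \<in> DM R \<Longrightarrow> \<not> ple a (kneg j) \<Longrightarrow> ple m a"
  shows "gmap R j = m"
  unfolding gmap_def by (rule Inf_in_DM_least) (use assms in auto)

lemma gmap_minus_point_core:
  assumes z: "z \<in> core R y"
  shows "gmap R (minus_point R y) = plus_point R z"
proof (rule gmap_eq_least)
  have "z \<in> udia R {y}"
    using z by (simp add: core_def Rinv_def udia_iff)
  then show "\<not> ple (plus_point R z) (kneg (minus_point R y))"
    using in_fst_plus_point[of z R] by (simp add: not_ple_kneg_minus_point_iff) blast
next
  fix a assume a: "a \<in> DM R" "\<not> ple a (kneg (minus_point R y))"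
  then obtain w where w: "w \<in> fst a" "(w, y) \<in> R"
    by (auto simp: not_ple_kneg_minus_point_iff udia_iff)
  \<comment> \<open>every element of \<open>\<breve>R(y)\<close> sees all successors of z, since z is in the core\<close>
  have "z \<in> ubox R (ldia R {w})"
    using core_ldia_subset[OF z w(2)] by (simp add: ldia_singleton_subset_iff)
  also have "\<dots> \<subseteq> fst a"
    using w(1) plus_point_le_iff[OF a(1), of w] by (simp add: ple_def)
  finally show "ple (plus_point R z) a"
    by (simp add: plus_point_le_iff[OF a(1)])
qed (rule plus_point_DM)

lemma gmap_plus_point_Sing:
  assumes x: "x \<in> Sing R"
  shows "gmap R (plus_point R x) = plus_point R x"
proof (rule gmap_eq_least)
  show "\<not> ple (plus_point R x) (kneg (plus_point R x))"
    using R_refl[of x] by (simp add: plus_point_Sing[OF x] ple_def kneg_def udia_iff)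
next
  fix a assume a: "a \<in> DM R" "\<not> ple a (kneg (plus_point R x))"
  then have "fst a \<inter> udia R {x} \<noteq> {} \<or> x \<in> snd a"
    by (auto simp: plus_point_Sing[OF x] ple_def kneg_def)
  moreover have "x \<in> udia R (ldia R (fst a))" if "fst a \<inter> udia R {x} \<noteq> {}"
    using that R_refl[of x] by (auto simp: modal_iffs)
  ultimately have "x \<in> snd a"
    using DM_D(3)[OF a(1)] by blast
  then have "x \<in> fst a"
    using x DM_D(4)[OF a(1)] by (metis Int_iff)
  then show "ple (plus_point R x) a"
    by (simp add: plus_point_le_iff[OF a(1)])
qed (rule plus_point_DM)

lemma gmap_plus_point_less:
  assumes x: "x \<notin> Sing R"
  shows "plt (gmap R (plus_point R x)) (plus_point R x)"
proof -
  have "x \<in> udia R {x}"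
    using subset_udia by blast
  then have "\<not> ple (minus_point R x) (kneg (plus_point R x))"
    using in_fst_plus_point[of x R] by (auto simp: ple_def kneg_def)
  then have below: "ple (gmap R (plus_point R x)) (minus_point R x)"
    by (rule gmap_lower[OF minus_point_DM[OF x]])
  moreover have "ple (minus_point R x) (plus_point R x)"
    using udia_mono[OF subset_ldia[of "{x}"]] by (simp add: ple_def)
  moreover have "gmap R (plus_point R x) \<noteq> plus_point R x"
    using below in_fst_plus_point[of x R] by (auto simp: ple_def)
  ultimately show ?thesis
    unfolding plt_def by (blast intro: ple_trans)
qed

lemma minus_point_le_gmap: "ple (minus_point R y) (gmap R (minus_point R y))"
proof -
  define G where "G = {a \<in> DM R. \<not> ple a (kneg (minus_point R y))}"
  have "y \<in> lbox R (\<Inter>(snd ` G))"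
  proof -
    have "v \<in> snd a" if v: "(v, y) \<in> R" and a: "a \<in> G" for v a
    proof -
      obtain w where "w \<in> fst a" "(w, y) \<in> R"
        using a unfolding G_def by (auto simp: not_ple_kneg_minus_point_iff udia_iff)
      then have "v \<in> udia R (ldia R (fst a))"
        using v by (auto simp: modal_iffs)
      then show ?thesis
        using DM_D(3)[of a R] a unfolding G_def by blast
    qed
    then show ?thesis
      by (auto simp: lbox_iff)
  qed
  then have "udia R {y} \<subseteq> udia R (lbox R (\<Inter>(snd ` G)))"
    by (simp add: udia_mono)
  then show ?thesis
    unfolding gmap_eq_DM_Inf G_def[symmetric] DM_Inf_def by (simp add: ple_def)
qed


subsection \<open>Complete distributivity\<close>

lemma cji_DM_join_prime:
  assumes cd: "completely_distributive ple (DM R)" and j: "cji ple (DM R) j"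
    and T: "T \<subseteq> DM R" and le: "ple j (DM_Sup R T)"
  obtains t where "t \<in> T" "ple j t"
proof -
  have jD: "j \<in> DM R"
    using j by (simp add: cji_DM_iff)
  define \<A> where "\<A> = {{j}, T}"
  define X where "X = {Inf_in ple (DM R) (f ` \<A>) | f. \<forall>A\<in>\<A>. f A \<in> A}"
  have \<A>: "\<A> \<subseteq> Pow (DM R)"
    unfolding \<A>_def using jD T by blast
  have choice_DM: "f ` \<A> \<subseteq> DM R" if "\<forall>A\<in>\<A>. f A \<in> A" for f
    using that \<A> by blast
  \<comment> \<open>distributing \<open>j \<and> \<Squnion>T\<close> over the two-element family exhibits j as a join\<close>
  have "j = Inf_in ple (DM R) {j, DM_Sup R T}"
    by (rule sym, rule Inf_in_DM_least) (use jD DM_Sup_in_DM[OF T] le ple_refl[of j] in auto)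
  also have "\<dots> = Inf_in ple (DM R) (Sup_in ple (DM R) ` \<A>)"
    unfolding \<A>_def using jD T by (simp add: Sup_in_DM_eq DM_Sup_singleton)
  also have "\<dots> = Sup_in ple (DM R) X"
    unfolding X_def by (rule cd[unfolded completely_distributive_def, rule_format, OF \<A>])
  finally have Sup_X: "Sup_in ple (DM R) X = j" ..
  have X: "X \<subseteq> DM R"
  proof
    fix a assume "a \<in> X"
    then obtain f where "a = Inf_in ple (DM R) (f ` \<A>)" "\<forall>A\<in>\<A>. f A \<in> A"
      unfolding X_def by blast
    then show "a \<in> DM R"
      using choice_DM by (simp add: Inf_in_DM_eq DM_Inf_in_DM)
  qed
  have "j \<in> X"
    using Sup_X by (intro cji_DM_D[OF j X]) (simp add: Sup_in_DM_eq[OF X])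
  then obtain f where f: "j = Inf_in ple (DM R) (f ` \<A>)" "\<forall>A\<in>\<A>. f A \<in> A"
    unfolding X_def by blast
  have "f T \<in> T"
    using f(2) unfolding \<A>_def by simp
  moreover have "ple j (f T)"
    unfolding f(1) using choice_DM[OF f(2)] by (rule Inf_in_DM_lower[rotated]) (simp add: \<A>_def)
  ultimately show thesis
    by (rule that)
qed

lemma minus_point_less_gmap:
  assumes cd: "completely_distributive ple (DM R)"
    and y: "y \<notin> Sing R" and j: "cji ple (DM R) (minus_point R y)"
  shows "plt (minus_point R y) (gmap R (minus_point R y))"
proof -
  define G where "G = {a \<in> DM R. \<not> ple a (kneg (minus_point R y))}"
  have "minus_point R y \<noteq> gmap R (minus_point R y)"
  proof
    assume "minus_point R y = gmap R (minus_point R y)"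
    then have no_common: "\<Inter>(fst ` G) = {}"
      unfolding gmap_eq_DM_Inf G_def[symmetric] DM_Inf_def by simp
    \<comment> \<open>then the negations of the elements of G cover everything, and join-primeness of
      \<open>(\<emptyset>, {y}\<^sup>\<blacktriangle>)\<close> puts it below one of them\<close>
    have "kneg ` G \<subseteq> DM R"
      unfolding G_def using kneg_DM by blast
    moreover have "\<Union>(snd ` kneg ` G) = UNIV"
      using no_common by (auto simp: kneg_def)
    then have "ple (minus_point R y) (DM_Sup R (kneg ` G))"
      by (simp add: ple_def DM_Sup_def)
    ultimately obtain a where "a \<in> G" "ple (minus_point R y) (kneg a)"
      using cji_DM_join_prime[OF cd j] by blast
    then show False
      unfolding G_def by (simp add: ple_kneg_iff)
  qed
  then show ?thesis
    using minus_point_le_gmap by (simp add: plt_def)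
qed

subsection \<open>The three classes of completely join-irreducible elements\<close>

lemma JDM_trichotomy:
  assumes cd: "completely_distributive ple (DM R)" and j: "j \<in> JDM R"
  obtains (circ) x where "x \<in> Sing R" "j = plus_point R x" "gmap R j = j"
    | (plus) x where "x \<notin> Sing R" "j = plus_point R x"
        "cji (\<subseteq>) (range (ldia R)) (ldia R {x})" "plt (gmap R j) j"
    | (minus) y where "y \<notin> Sing R" "j = minus_point R y"
        "cji (\<subseteq>) (range (udia R)) (udia R {y})" "plt j (gmap R j)"
proof -
  have c: "cji ple (DM R) j"
    using j by (simp add: JDM_def)
  from j show thesis
  proof (cases rule: JDM_cases)
    case (plus x)
    then show thesis
      using c that(1,2) gmap_plus_point_Sing gmap_plus_point_less cji_plus_point_iff
      by (cases "x \<in> Sing R") auto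
  next
    case (minus y)
    then show thesis
      using c that(3) minus_point_less_gmap[OF cd] cji_minus_point_iff by auto
  qed
qed

lemma Jminus_eq:
  assumes cd: "completely_distributive ple (DM R)"
  shows "Jminus R = {minus_point R x | x. cji (\<subseteq>) (range (udia R)) (udia R {x}) \<and> x \<notin> Sing R}"
proof (intro equalityI subsetI)
  fix j assume "j \<in> Jminus R"
  then have j: "j \<in> JDM R" "plt j (gmap R j)"
    by (simp_all add: Jminus_def)
  from cd j(1) show "j \<in> {minus_point R x | x. cji (\<subseteq>) (range (udia R)) (udia R {x}) \<and> x \<notin> Sing R}"
  proof (cases rule: JDM_trichotomy)
    case circ
    then show ?thesis
      using j(2) plt_irrefl by metis
  next
    case plus
    then show ?thesis
      using j(2) plt_asym by metis
  qed blast
next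
  fix j assume "j \<in> {minus_point R x | x. cji (\<subseteq>) (range (udia R)) (udia R {x}) \<and> x \<notin> Sing R}"
  then obtain x where x: "j = minus_point R x" "cji (\<subseteq>) (range (udia R)) (udia R {x})" "x \<notin> Sing R"
    by blast
  then have "cji ple (DM R) j"
    by (simp add: cji_minus_point_iff)
  then show "j \<in> Jminus R"
    using minus_point_less_gmap[OF cd x(3)] x(1) by (simp add: Jminus_def JDM_def)
qed

lemma Jplus_eq:
  assumes cd: "completely_distributive ple (DM R)"
  shows "Jplus R = {plus_point R x | x. cji (\<subseteq>) (range (ldia R)) (ldia R {x}) \<and> x \<notin> Sing R}"
proof (intro equalityI subsetI)
  fix j assume "j \<in> Jplus R"
  then have j: "j \<in> JDM R" "plt (gmap R j) j"
    by (simp_all add: Jplus_def)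
  from cd j(1) show "j \<in> {plus_point R x | x. cji (\<subseteq>) (range (ldia R)) (ldia R {x}) \<and> x \<notin> Sing R}"
  proof (cases rule: JDM_trichotomy)
    case circ
    then show ?thesis
      using j(2) plt_irrefl by metis
  next
    case minus
    then show ?thesis
      using j(2) plt_asym by metis
  qed blast
next
  fix j assume "j \<in> {plus_point R x | x. cji (\<subseteq>) (range (ldia R)) (ldia R {x}) \<and> x \<notin> Sing R}"
  then obtain x where x: "j = plus_point R x" "cji (\<subseteq>) (range (ldia R)) (ldia R {x})" "x \<notin> Sing R"
    by blast
  then show "j \<in> Jplus R"
    using gmap_plus_point_less[OF x(3)] by (simp add: Jplus_def JDM_def cji_plus_point_iff)
qed

lemma Jcirc_eq:
  assumes cd: "completely_distributive ple (DM R)"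
  shows "Jcirc R = {({x}, udia R {x}) | x. x \<in> Sing R}"
proof (intro equalityI subsetI)
  fix j assume "j \<in> Jcirc R"
  then have j: "j \<in> JDM R" "j = gmap R j"
    by (simp_all add: Jcirc_def)
  from cd j(1) show "j \<in> {({x}, udia R {x}) | x. x \<in> Sing R}"
  proof (cases rule: JDM_trichotomy)
    case (circ x)
    then show ?thesis
      using plus_point_Sing by blast
  next
    case plus
    then show ?thesis
      using j(2) plt_irrefl by metis
  next
    case minus
    then show ?thesis
      using j(2) plt_irrefl by metis
  qed
next
  fix j assume "j \<in> {({x}, udia R {x}) | x. x \<in> Sing R}"
  then obtain x where x: "x \<in> Sing R" "j = plus_point R x"
    using plus_point_Sing by auto
  then show "j \<in> Jcirc R"
    using gmap_plus_point_Sing[OF x(1)] cji_ldia_Sing[OF x(1)]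
    by (simp add: Jcirc_def JDM_def cji_plus_point_iff)
qed

lemma Jminus_core:
  assumes "minus_point R x \<in> Jminus R" and z: "z \<in> core R x"
  shows "gmap R (minus_point R x) = plus_point R z \<and> z \<notin> Sing R
    \<and> cji (\<subseteq>) (range (ldia R)) (ldia R {z})"
proof -
  have "x \<notin> Sing R"
    using assms(1) minus_point_DM_imp_not_Sing by (simp add: Jminus_def JDM_def cji_DM_iff)
  then show ?thesis
    using gmap_minus_point_core[OF z] core_not_Sing[OF _ z] cji_ldia_core[OF z] by simp
qed

end

theorem mainTheorem7:
  fixes R :: "('a \<times> 'a) set"
  assumes "refl R"
    and "completely_distributive ple (DM R)"
  shows "Jminus R = {({}, udia R {x}) | x.
            cji (\<subseteq>) (range (udia R)) (udia R {x}) \<and> x \<notin> Sing R}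
     \<and> (\<forall>x z. ({}, udia R {x}) \<in> Jminus R \<longrightarrow> z \<in> core R x \<longrightarrow>
            gmap R ({}, udia R {x}) = (ubox R (ldia R {z}), udia R (ldia R {z}))
            \<and> z \<notin> Sing R \<and> cji (\<subseteq>) (range (ldia R)) (ldia R {z}))
     \<and> Jplus R = {(ubox R (ldia R {x}), udia R (ldia R {x})) | x.
            cji (\<subseteq>) (range (ldia R)) (ldia R {x}) \<and> x \<notin> Sing R}
     \<and> Jcirc R = {({x}, udia R {x}) | x. x \<in> Sing R}"
proof -
  interpret refl_rel R
    by (rule refl_rel.intro) fact
  show ?thesis
    by (intro conjI Jminus_eq Jplus_eq Jcirc_eq assms(2)) (intro allI impI; rule Jminus_core)
qed

end
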